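(* There exists an absolute constant $c>0$ such that the following holds. Let $S\subseteq\mathbb{R}^d$ be measurable, $\vec{\mu}^*\in\mathbb{R}^d$, $\vec{\Sigma}^*$ symmetric positive definite with $\int_S\mathcal{N}(\vec{\mu}^*,\vec{\Sigma}^*;\vec{x})d\vec{x}>0$, $\vec{\Theta}^*=\vec{\Sigma}^{*-1}$, $\vec{v}^*=\vec{\Sigma}^{*-1}\vec{\mu}^*$, and let $\vec{x}_1,\dots,\vec{x}_n$ be samples. Suppose $l_n$ (and hence $L_n$) is $\kappa$-strongly convex on a Euclidean ball of radius $r'>0$ around $(\vec{\Theta}^*,\vec{v}^* )$, i.e. $\nabla^2 l_n(\vec{\Theta},\vec{v})\succeq\kappa I$ for all $(\vec{\Theta},\vec{v})$ with $\|\vec{\Theta}-\vec{\Theta}^*\|_F^2+\|\vec{v}-\vec{v}^*\|_2^2\le r'^2$. Let $0<\epsilon\le r'$ and choose $\lambda$ with \[ 2\|\nabla l_n(\vec{\Theta}^*,\vec{v}^* )\|_\infty\le\lambda\le \frac{c\,\kappa\,\epsilon}{\sqrt{\mathrm{nz}(\vec{\Theta}^* )}}. \] Then every minimizer $(\tilde{\vec{\Theta}},\tilde{\vec{v}})$ of $L_n$ satisfies $\|\tilde{\vec{\Theta}}-\vec{\Theta}^*\|_F+\|\tilde{\vec{v}}-\vec{v}^*\|_2\le\epsilon$.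
   Context: Parameters $(\vec{\Theta},\vec{v})$ range over $\mathcal{S}_{d\times d}\times\mathbb{R}^d$, where $\mathcal{S}_{d\times d}$ is the space of real symmetric $d\times d$ matrices. Define $l_n(\vec{\Theta},\vec{v})=\frac1n\sum_{i=1}^n\left(\frac12\vec{x}_i^\top\vec{\Theta}\vec{x}_i-\vec{x}_i^\top\vec{v}\right)+\log\int_S\exp\left(-\frac12\vec{z}^\top\vec{\Theta}\vec{z}+\vec{z}^\top\vec{v}\right)d\vec{z}$ (finite-sample negative log-likelihood for samples from the Gaussian $\mathcal{N}(\vec{\mu}^*,\vec{\Sigma}^* )$ conditioned on $S$) and $L_n=l_n+\lambda\sum_{i\ne j}|\Theta_{ij}|$. $\nabla l_n$ is the vector of partial derivatives with respect to the entries of $\vec{\Theta}$ and of $\vec{v}$, and $\|\cdot\|_\infty$ its maximum absolute entry. $\mathrm{nz}(A)$ is the number of nonzero entries of $A$. *)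

theory Defs
  imports "HOL-Probability.Probability" "HOL-Combinatorics.Permutations"
begin

text \<open>The dimension d is a natural number (so that the absolute constant c can be
quantified before d).  Vectors of R^d are functions nat => real, matrices are
functions nat => nat => real; only the entries with indices < d matter.\<close>

definition lebd :: "nat \<Rightarrow> (nat \<Rightarrow> real) measure" where
  "lebd d = PiM {..<d} (\<lambda>_. lborel)"

definition ip :: "nat \<Rightarrow> (nat \<Rightarrow> real) \<Rightarrow> (nat \<Rightarrow> real) \<Rightarrow> real" where
  "ip d x y = (\<Sum>i<d. x i * y i)"

definition qf :: "nat \<Rightarrow> (nat \<Rightarrow> nat \<Rightarrow> real) \<Rightarrow> (nat \<Rightarrow> real) \<Rightarrow> real" where
  "qf d A x = (\<Sum>i<d. \<Sum>j<d. x i * A i j * x j)"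

definition matvec :: "nat \<Rightarrow> (nat \<Rightarrow> nat \<Rightarrow> real) \<Rightarrow> (nat \<Rightarrow> real) \<Rightarrow> (nat \<Rightarrow> real)" where
  "matvec d A x = (\<lambda>i. if i < d then (\<Sum>j<d. A i j * x j) else 0)"

definition sym_mat :: "nat \<Rightarrow> (nat \<Rightarrow> nat \<Rightarrow> real) \<Rightarrow> bool" where
  "sym_mat d A \<longleftrightarrow> (\<forall>i<d. \<forall>j<d. A i j = A j i)"

definition pos_def :: "nat \<Rightarrow> (nat \<Rightarrow> nat \<Rightarrow> real) \<Rightarrow> bool" where
  "pos_def d A \<longleftrightarrow> sym_mat d A \<and> (\<forall>x. (\<exists>i<d. x i \<noteq> 0) \<longrightarrow> qf d A x > 0)"

definition det_d :: "nat \<Rightarrow> (nat \<Rightarrow> nat \<Rightarrow> real) \<Rightarrow> real" where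
  "det_d d A = (\<Sum>p | p permutes {..<d}. of_int (sign p) * (\<Prod>i<d. A i (p i)))"

definition is_inv_d :: "nat \<Rightarrow> (nat \<Rightarrow> nat \<Rightarrow> real) \<Rightarrow> (nat \<Rightarrow> nat \<Rightarrow> real) \<Rightarrow> bool" where
  "is_inv_d d A B \<longleftrightarrow>
     (\<forall>i j. (d \<le> i \<or> d \<le> j) \<longrightarrow> B i j = 0) \<and>
     (\<forall>i<d. \<forall>j<d. (\<Sum>k<d. A i k * B k j) = (if i = j then 1 else 0)) \<and>
     (\<forall>i<d. \<forall>j<d. (\<Sum>k<d. B i k * A k j) = (if i = j then 1 else 0))"

definition mat_inv :: "nat \<Rightarrow> (nat \<Rightarrow> nat \<Rightarrow> real) \<Rightarrow> (nat \<Rightarrow> nat \<Rightarrow> real)" where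
  "mat_inv d A = (THE B. is_inv_d d A B)"

definition gauss_density ::
  "nat \<Rightarrow> (nat \<Rightarrow> real) \<Rightarrow> (nat \<Rightarrow> nat \<Rightarrow> real) \<Rightarrow> (nat \<Rightarrow> real) \<Rightarrow> real" where
  "gauss_density d \<mu> \<Sigma> x =
     (2 * pi) powr (- real d / 2) * det_d d \<Sigma> powr (-1/2) *
     exp (- (1/2) * qf d (mat_inv d \<Sigma>) (\<lambda>i. x i - \<mu> i))"

definition frob :: "nat \<Rightarrow> (nat \<Rightarrow> nat \<Rightarrow> real) \<Rightarrow> real" where
  "frob d A = sqrt (\<Sum>i<d. \<Sum>j<d. (A i j)\<^sup>2)"

definition norm2 :: "nat \<Rightarrow> (nat \<Rightarrow> real) \<Rightarrow> real" where
  "norm2 d v = sqrt (\<Sum>i<d. (v i)\<^sup>2)"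

text \<open>Finite-sample negative log-likelihood l_n, valued in the extended reals
(it is +infinity where the normalizing integral diverges).  Samples x_1..x_n.\<close>
definition log_part :: "nat \<Rightarrow> (nat \<Rightarrow> real) set \<Rightarrow> (nat \<Rightarrow> nat \<Rightarrow> real) \<Rightarrow> (nat \<Rightarrow> real) \<Rightarrow> ereal" where
  "log_part d S \<Theta> v =
     (let Z = (\<integral>\<^sup>+ z. indicator S z * ennreal (exp (- (1/2) * qf d \<Theta> z + ip d z v)) \<partial>lebd d)
      in if Z = \<infinity> then \<infinity> else if Z = 0 then - \<infinity> else ereal (ln (enn2real Z)))"

definition lnll :: "nat \<Rightarrow> (nat \<Rightarrow> real) set \<Rightarrow> nat \<Rightarrow> (nat \<Rightarrow> nat \<Rightarrow> real) \<Rightarrow>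
    (nat \<Rightarrow> nat \<Rightarrow> real) \<Rightarrow> (nat \<Rightarrow> real) \<Rightarrow> ereal" where
  "lnll d S n xs \<Theta> v =
     ereal ((1 / real n) * (\<Sum>i\<in>{1..n}. (1/2) * qf d \<Theta> (xs i) - ip d (xs i) v))
     + log_part d S \<Theta> v"

definition Lnll :: "nat \<Rightarrow> (nat \<Rightarrow> real) set \<Rightarrow> nat \<Rightarrow> (nat \<Rightarrow> nat \<Rightarrow> real) \<Rightarrow> real \<Rightarrow>
    (nat \<Rightarrow> nat \<Rightarrow> real) \<Rightarrow> (nat \<Rightarrow> real) \<Rightarrow> ereal" where
  "Lnll d S n xs lam \<Theta> v =
     lnll d S n xs \<Theta> v + ereal (lam * (\<Sum>i<d. \<Sum>j<d. if i \<noteq> j then \<bar>\<Theta> i j\<bar> else 0))"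

definition grad_inf :: "nat \<Rightarrow> ((nat \<Rightarrow> nat \<Rightarrow> real) \<Rightarrow> (nat \<Rightarrow> real) \<Rightarrow> ereal) \<Rightarrow>
    (nat \<Rightarrow> nat \<Rightarrow> real) \<Rightarrow> (nat \<Rightarrow> real) \<Rightarrow> real" where
  "grad_inf d f \<Theta> v = Max (insert 0
     ((\<lambda>(i,j). \<bar>deriv (\<lambda>t. real_of_ereal (f (\<lambda>a b. \<Theta> a b + (if a = i \<and> b = j then t else 0)) v)) 0\<bar>)
        ` ({..<d} \<times> {..<d})
      \<union> (\<lambda>i. \<bar>deriv (\<lambda>t. real_of_ereal (f \<Theta> (\<lambda>a. v a + (if a = i then t else 0)))) 0\<bar>) ` {..<d}))"

text \<open>Hessian of f at (Theta, v), taken on the space of (symmetric matrix, vector)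
pairs with the Frobenius/Euclidean inner product, is >= kappa I: f is finite near
(Theta,v) along every symmetric direction (H,w), and the second derivative of
s |-> f(Theta + s H, v + s w) at 0 is at least kappa (||H||_F^2 + ||w||^2).\<close>
definition hess_ge :: "nat \<Rightarrow> real \<Rightarrow> ((nat \<Rightarrow> nat \<Rightarrow> real) \<Rightarrow> (nat \<Rightarrow> real) \<Rightarrow> ereal) \<Rightarrow>
    (nat \<Rightarrow> nat \<Rightarrow> real) \<Rightarrow> (nat \<Rightarrow> real) \<Rightarrow> bool" where
  "hess_ge d \<kappa> f \<Theta> v \<longleftrightarrow>
     (\<forall>H w. sym_mat d H \<longrightarrow>
        (let \<phi> = (\<lambda>s. f (\<lambda>a b. \<Theta> a b + s * H a b) (\<lambda>a. v a + s * w a)) in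
         (\<forall>\<^sub>F s in nhds 0. \<bar>\<phi> s\<bar> \<noteq> \<infinity>) \<and>
         (\<exists>\<phi>1 \<phi>2. (\<forall>\<^sub>F s in nhds 0. ((\<lambda>t. real_of_ereal (\<phi> t)) has_real_derivative \<phi>1 s) (at s)) \<and>
                  (\<phi>1 has_real_derivative \<phi>2) (at 0) \<and>
                  \<phi>2 \<ge> \<kappa> * ((frob d H)\<^sup>2 + (norm2 d w)\<^sup>2))))"

definition nz :: "nat \<Rightarrow> (nat \<Rightarrow> nat \<Rightarrow> real) \<Rightarrow> nat" where
  "nz d A = card {(i,j). i < d \<and> j < d \<and> A i j \<noteq> 0}"

end

theory Submission
  imports Defs "Jordan_Normal_Form.Determinant"
begin

text \<open>Suppose a minimizer lies at distance more than epsilon from (Theta*, v*) and walk from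
  (Theta*, v*) towards it, stopping at distance epsilon/2, inside the ball of strong convexity.
  Along this segment l_n grows at least by its initial slope plus kappa/2 times the squared
  distance, while convexity of l_n and of the penalty together with minimality bound the growth by
  the decrease of the penalty.  The initial slope is at least -||grad l_n(Theta*, v*)||_inf times
  the l1 length of the direction.  As lambda is at least twice that norm, the entries off the
  support of Theta* are paid for by the penalty; the support contains the diagonal (Theta* is
  positive definite), so by Cauchy-Schwarz what remains is at most
  3/2 lambda sqrt(nz(Theta*)) (||H||_F + ||w||_2), i.e. 3 lambda sqrt(nz(Theta*)) times the distance.
  Hence kappa epsilon/2 <= 6 lambda sqrt(nz(Theta*)), which fails for c = 1/24.\<close>

section \<open>Inverse of a positive definite matrix\<close>

lemma qf_eq_sum_row: "qf d A x = (\<Sum>i<d. x i * (\<Sum>j<d. A i j * x j))"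
  unfolding qf_def by (simp add: sum_distrib_left mult.assoc)

lemma pos_def_det_nonzero:
  assumes pd: "pos_def d A"
  shows "det (mat d d (\<lambda>(i, j). A i j)) \<noteq> 0"
proof
  let ?M = "mat d d (\<lambda>(i, j). A i j)"
  assume "det ?M = 0"
  then obtain u where u: "u \<in> carrier_vec d" "u \<noteq> 0\<^sub>v d" "?M *\<^sub>v u = 0\<^sub>v d"
    using det_0_iff_vec_prod_zero[of ?M d] by auto
  define x where "x i = (if i < d then u $ i else 0)" for i
  have "\<exists>i<d. x i \<noteq> 0"
  proof (rule ccontr)
    assume "\<not> ?thesis"
    hence "u = 0\<^sub>v d" using u(1) by (intro eq_vecI) (auto simp: x_def)
    with u(2) show False ..
  qed
  hence "qf d A x > 0" using pd unfolding pos_def_def by auto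
  moreover have "(\<Sum>j<d. A i j * x j) = 0" if "i < d" for i
  proof -
    have "(?M *\<^sub>v u) $ i = 0" using u(3) that by simp
    thus ?thesis using that u(1)
      by (simp add: x_def mult_mat_vec_def scalar_prod_def lessThan_atLeast0)
  qed
  ultimately show False by (simp add: qf_eq_sum_row)
qed

lemma pos_def_ex_inverse:
  assumes pd: "pos_def d A"
  shows "\<exists>B. is_inv_d d A B"
proof -
  define M where "M = mat d d (\<lambda>(i,j). A i j)"
  have M: "M \<in> carrier_mat d d" unfolding M_def by simp
  have "det M \<noteq> 0" unfolding M_def by (rule pos_def_det_nonzero[OF pd])
  then obtain B where B: "B \<in> carrier_mat d d" "B * M = 1\<^sub>m d" "M * B = 1\<^sub>m d"
    using det_non_zero_imp_unit[OF M, of "()"] unfolding Units_def by (auto simp: ring_mat_def)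
  define B' where "B' i j = (if i < d \<and> j < d then B $$ (i,j) else 0)" for i j
  have "is_inv_d d A B'"
    unfolding is_inv_d_def
  proof (intro conjI allI impI)
    fix i j assume "d \<le> i \<or> d \<le> j" thus "B' i j = 0" by (auto simp: B'_def)
  next
    fix i j assume ij: "i < d" "j < d"
    have "(M * B) $$ (i,j) = (if i = j then 1 else 0)" using B(3) ij by simp
    thus "(\<Sum>k<d. A i k * B' k j) = (if i = j then 1 else 0)" using ij B(1)
      by (auto simp: M_def B'_def scalar_prod_def lessThan_atLeast0 intro!: sum.cong)
  next
    fix i j assume ij: "i < d" "j < d"
    have "(B * M) $$ (i,j) = (if i = j then 1 else 0)" using B(2) ij by simp
    thus "(\<Sum>k<d. B' i k * A k j) = (if i = j then 1 else 0)" using ij B(1)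
      by (auto simp: M_def B'_def scalar_prod_def lessThan_atLeast0 intro!: sum.cong)
  qed
  thus ?thesis by blast
qed

lemma is_inv_d_unique:
  assumes B: "is_inv_d d A B" and B': "is_inv_d d A B'"
  shows "B' = B"
proof (intro ext)
  fix i j
  show "B' i j = B i j"
  proof (cases "i < d \<and> j < d")
    case True
    have "B i j = (\<Sum>k<d. B i k * (if k = j then 1 else 0))"
      using True by (simp add: if_distrib[of "\<lambda>x. _ * x"] cong: if_cong)
    also have "\<dots> = (\<Sum>k<d. B i k * (\<Sum>l<d. A k l * B' l j))"
      using B' True unfolding is_inv_d_def by (intro sum.cong) auto
    also have "\<dots> = (\<Sum>l<d. (\<Sum>k<d. B i k * A k l) * B' l j)"
      by (simp only: sum_distrib_left sum_distrib_right mult.assoc) (rule sum.swap)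
    also have "\<dots> = (\<Sum>l<d. (if i = l then 1 else 0) * B' l j)"
      using B True unfolding is_inv_d_def by (intro sum.cong) auto
    also have "\<dots> = B' i j"
      using True by (simp add: if_distrib[of "\<lambda>x. x * _"] cong: if_cong)
    finally show ?thesis by simp
  next
    case False
    thus ?thesis using B B' unfolding is_inv_d_def by auto
  qed
qed

lemma is_inv_d_mat_inv:
  assumes "pos_def d A"
  shows "is_inv_d d A (mat_inv d A)"
  using pos_def_ex_inverse[OF assms] is_inv_d_unique unfolding mat_inv_def by (metis theI)

text \<open>The transpose of the inverse of a symmetric matrix is again an inverse.\<close>
lemma sym_mat_mat_inv:
  assumes pd: "pos_def d A"
  shows "sym_mat d (mat_inv d A)"
proof -
  let ?B = "mat_inv d A"
  have symA: "A i j = A j i" if "i < d" "j < d" for i j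
    using pd that unfolding pos_def_def sym_mat_def by auto
  have B: "is_inv_d d A ?B" by (rule is_inv_d_mat_inv[OF pd])
  have "is_inv_d d A (\<lambda>i j. ?B j i)"
    unfolding is_inv_d_def
  proof (intro conjI allI impI)
    fix i j assume "d \<le> i \<or> d \<le> j" thus "?B j i = 0" using B unfolding is_inv_d_def by auto
  next
    fix i j assume ij: "i < d" "j < d"
    have "(\<Sum>k<d. A i k * ?B j k) = (\<Sum>k<d. ?B j k * A k i)"
      using ij symA by (intro sum.cong) auto
    thus "(\<Sum>k<d. A i k * ?B j k) = (if i = j then 1 else 0)"
      using B ij unfolding is_inv_d_def by auto
  next
    fix i j assume ij: "i < d" "j < d"
    have "(\<Sum>k<d. ?B k i * A k j) = (\<Sum>k<d. A j k * ?B k i)"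
      using ij symA by (intro sum.cong) auto
    thus "(\<Sum>k<d. ?B k i * A k j) = (if i = j then 1 else 0)"
      using B ij unfolding is_inv_d_def by auto
  qed
  from is_inv_d_unique[OF B this] show ?thesis
    unfolding sym_mat_def by metis
qed

text \<open>The i-th diagonal entry of the inverse is the quadratic form of A at the i-th column
  of the inverse.\<close>
lemma mat_inv_diag_pos:
  assumes pd: "pos_def d A" and i: "i < d"
  shows "mat_inv d A i i > 0"
proof -
  let ?B = "mat_inv d A"
  have B: "is_inv_d d A ?B" by (rule is_inv_d_mat_inv[OF pd])
  define x where "x k = ?B k i" for k
  have Ax: "(\<Sum>l<d. A k l * x l) = (if k = i then 1 else 0)" if "k < d" for k
    using B that i unfolding is_inv_d_def x_def by auto
  have "\<exists>k<d. x k \<noteq> 0"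
  proof (rule ccontr)
    assume "\<not> ?thesis"
    hence "(\<Sum>l<d. A i l * x l) = 0" by (intro sum.neutral) auto
    with Ax[OF i] show False by simp
  qed
  hence "qf d A x > 0" using pd unfolding pos_def_def by blast
  also have "qf d A x = x i"
    unfolding qf_eq_sum_row using i by (simp add: Ax if_distrib[of "\<lambda>y. _ * y"] cong: if_cong)
  finally show ?thesis unfolding x_def .
qed

lemma qf_add: "qf d (\<lambda>a b. A a b + B a b) z = qf d A z + qf d B z"
  unfolding qf_def by (simp add: algebra_simps sum.distrib)

lemma qf_cmult: "qf d (\<lambda>a b. s * A a b) z = s * qf d A z"
  unfolding qf_def by (simp add: algebra_simps sum_distrib_left)

lemma qf_single:
  assumes "i < d" "j < d"
  shows "qf d (\<lambda>a b. if a = i \<and> b = j then c else 0) z = z i * c * z j"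
proof -
  have "(\<Sum>b<d. z a * (if a = i \<and> b = j then c else 0) * z b) = (if a = i then z i * c * z j else 0)"
    for a
    using assms
    by (cases "a = i") (simp_all add: if_distrib[of "\<lambda>x. _ * x"] if_distrib[of "\<lambda>x. x * _"] cong: if_cong)
  thus ?thesis unfolding qf_def using assms by simp
qed

lemma ip_add: "ip d z (\<lambda>a. v a + w a) = ip d z v + ip d z w"
  unfolding ip_def by (simp add: algebra_simps sum.distrib)

lemma ip_cmult: "ip d z (\<lambda>a. s * w a) = s * ip d z w"
  unfolding ip_def by (simp add: algebra_simps sum_distrib_left)

lemma ip_single: "i < d \<Longrightarrow> ip d z (\<lambda>a. if a = i then c else 0) = z i * c"
  unfolding ip_def by (simp add: if_distrib[of "\<lambda>x. _ * x"] sum.delta cong: if_cong)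

lemma frob_nonneg: "0 \<le> frob d H"
  unfolding frob_def by (simp add: sum_nonneg)

lemma norm2_nonneg: "0 \<le> norm2 d w"
  unfolding norm2_def by (simp add: sum_nonneg)

lemma frob_cmult: "frob d (\<lambda>i j. s * H i j) = \<bar>s\<bar> * frob d H"
  unfolding frob_def by (simp add: power_mult_distrib sum_distrib_left[symmetric] real_sqrt_mult)

lemma norm2_cmult: "norm2 d (\<lambda>i. s * w i) = \<bar>s\<bar> * norm2 d w"
  unfolding norm2_def by (simp add: power_mult_distrib sum_distrib_left[symmetric] real_sqrt_mult)

lemma sum_abs_on_support_le:
  "(\<Sum>i<d. \<Sum>j<d. if A i j \<noteq> 0 then \<bar>H i j\<bar> else 0) \<le> sqrt (real (nz d A)) * frob d H"
proof -
  let ?P = "{..<d} \<times> {..<d}"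
  define e where "e p = (if A (fst p) (snd p) \<noteq> 0 then 1 else (0::real))" for p
  have "(\<Sum>i<d. \<Sum>j<d. if A i j \<noteq> 0 then \<bar>H i j\<bar> else 0) = (\<Sum>p\<in>?P. \<bar>e p\<bar> * \<bar>H (fst p) (snd p)\<bar>)"
    by (simp add: sum.cartesian_product e_def case_prod_beta' if_distrib[of "\<lambda>x. x * _"] cong: if_cong)
  also have "\<dots> \<le> L2_set e ?P * L2_set (\<lambda>p. H (fst p) (snd p)) ?P" by (rule L2_set_mult_ineq)
  also have "L2_set e ?P = sqrt (real (nz d A))"
  proof -
    have "(\<Sum>p\<in>?P. (e p)\<^sup>2) = real (card {p\<in>?P. A (fst p) (snd p) \<noteq> 0})"
      by (simp add: e_def sum.inter_filter[symmetric] if_distrib[of "\<lambda>x. x\<^sup>2"] cong: if_cong)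
    also have "{p\<in>?P. A (fst p) (snd p) \<noteq> 0} = {(i,j). i < d \<and> j < d \<and> A i j \<noteq> 0}" by auto
    finally show ?thesis unfolding L2_set_def nz_def by simp
  qed
  also have "L2_set (\<lambda>p. H (fst p) (snd p)) ?P = frob d H"
    unfolding L2_set_def frob_def by (simp add: sum.cartesian_product case_prod_beta')
  finally show ?thesis .
qed

lemma sum_abs_le_sqrt_dim: "(\<Sum>i<d. \<bar>w i\<bar>) \<le> sqrt (real d) * norm2 d w"
  using L2_set_mult_ineq[of "\<lambda>_. 1" w "{..<d}"] unfolding L2_set_def norm2_def by simp

lemma dim_le_nz:
  assumes "\<forall>i<d. A i i \<noteq> 0"
  shows "d \<le> nz d A"
proof -
  have "(\<lambda>i. (i, i)) ` {..<d} \<subseteq> {(i,j). i < d \<and> j < d \<and> A i j \<noteq> 0}" using assms by auto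
  moreover have "finite {(i,j). i < d \<and> j < d \<and> A i j \<noteq> 0}"
    by (rule finite_subset[of _ "{..<d} \<times> {..<d}"]) auto
  ultimately have "card ((\<lambda>i. (i, i)) ` {..<d}) \<le> nz d A" unfolding nz_def by (rule card_mono[rotated])
  thus ?thesis by (simp add: card_image inj_on_def)
qed

lemma quadratic_lower_bound_from_second_derivative:
  fixes g :: "real \<Rightarrow> real"
  assumes T: "0 \<le> T"
    and g0: "(g has_real_derivative g1) (at 0)"
    and g'': "\<And>s0. 0 \<le> s0 \<Longrightarrow> s0 \<le> T \<Longrightarrow> \<exists>\<phi>1 \<phi>2.
       (\<forall>\<^sub>F s in nhds 0. ((\<lambda>t. g (s0 + t)) has_real_derivative \<phi>1 s) (at s)) \<and>
       (\<phi>1 has_real_derivative \<phi>2) (at 0) \<and> K \<le> \<phi>2"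
  shows "g 0 + T * g1 + K * T\<^sup>2 / 2 \<le> g T"
proof -
  define D where "D = deriv g"
  have shift: "((\<lambda>t. f (s + t)) has_real_derivative y) (at t) \<Longrightarrow> (f has_real_derivative y) (at (s + t))"
    for f :: "real \<Rightarrow> real" and s t y
    using DERIV_shift[of f y t s] by (simp add: add.commute)
  have g': "(g has_real_derivative D s) (at s)" if "0 \<le> s" "s \<le> T" for s
  proof -
    from g''[OF that] obtain \<phi>1 where
      "\<forall>\<^sub>F u in nhds 0. ((\<lambda>t. g (s + t)) has_real_derivative \<phi>1 u) (at u)" by blast
    from shift[OF eventually_nhds_x_imp_x[OF this]] show ?thesis
      unfolding D_def using DERIV_imp_deriv by fastforce
  qed
  have D': "\<exists>y. (D has_real_derivative y) (at s) \<and> K \<le> y" if "0 \<le> s" "s \<le> T" for s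
  proof -
    from g''[OF that] obtain \<phi>1 \<phi>2 where
      e: "\<forall>\<^sub>F u in nhds 0. ((\<lambda>t. g (s + t)) has_real_derivative \<phi>1 u) (at u)"
      and \<phi>1: "(\<phi>1 has_real_derivative \<phi>2) (at 0)" and K: "K \<le> \<phi>2" by blast
    have "\<forall>\<^sub>F u in nhds 0. \<phi>1 u = D (s + u)"
      using e by eventually_elim (metis D_def DERIV_imp_deriv shift)
    hence "((\<lambda>u. D (s + u)) has_real_derivative \<phi>2) (at 0)"
      using \<phi>1 DERIV_cong_ev[of 0 0 \<phi>1 "\<lambda>u. D (s + u)" \<phi>2 \<phi>2] by simp
    with K shift[where f=D and s=s and t=0] show ?thesis by auto
  qed
  have D0: "D 0 = g1" unfolding D_def using g0 DERIV_imp_deriv by blast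
  have D_lower: "g1 + K * s \<le> D s" if "0 \<le> s" "s \<le> T" for s
  proof -
    have "(\<lambda>x. D x - K * x) 0 \<le> (\<lambda>x. D x - K * x) s"
    proof (rule DERIV_nonneg_imp_nondecreasing[OF that(1)])
      fix x assume "0 \<le> x" "x \<le> s"
      with that D'[of x] obtain y where "(D has_real_derivative y) (at x)" "K \<le> y" by auto
      thus "\<exists>y. ((\<lambda>x. D x - K * x) has_real_derivative y) (at x) \<and> 0 \<le> y"
        by (intro exI[of _ "y - K"]) (auto intro!: derivative_eq_intros)
    qed
    thus ?thesis using D0 by simp
  qed
  have "(\<lambda>x. g x - g1 * x - K * x\<^sup>2 / 2) 0 \<le> (\<lambda>x. g x - g1 * x - K * x\<^sup>2 / 2) T"
  proof (rule DERIV_nonneg_imp_nondecreasing[OF T])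
    fix x assume x: "0 \<le> x" "x \<le> T"
    show "\<exists>y. ((\<lambda>x. g x - g1 * x - K * x\<^sup>2 / 2) has_real_derivative y) (at x) \<and> 0 \<le> y"
      using g'[OF x] D_lower[OF x]
      by (intro exI[of _ "D x - g1 - K * x"]) (auto intro!: derivative_eq_intros simp: power2_eq_square)
  qed
  thus ?thesis by (simp add: algebra_simps)
qed

lemma DERIV_eq_if_touching:
  fixes f g :: "real \<Rightarrow> real"
  assumes f: "(f has_real_derivative f') (at x)" and g: "(g has_real_derivative g') (at x)"
    and eq: "f x = g x" and le: "\<forall>\<^sub>F y in nhds x. f y \<le> g y"
  shows "f' = g'"
proof -
  have "((\<lambda>y. g y - f y) has_derivative (*) (g' - f')) (at x)"
    using DERIV_diff[OF g f] by (simp add: has_field_derivative_def)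
  moreover have "\<forall>\<^sub>F y in at x. g x - f x \<le> g y - f y"
    using le eq by (auto simp: eventually_at_filter elim: eventually_mono)
  ultimately have "(*) (g' - f') = (\<lambda>h. 0)" by (rule has_derivative_local_min)
  thus ?thesis by (metis diff_eq_diff_eq diff_self mult.right_neutral)
qed

lemma eventually_nhds_0_scale:
  fixes c :: real
  assumes "\<forall>\<^sub>F t in nhds 0. P t"
  shows "\<forall>\<^sub>F s in nhds 0. P (c * s)"
proof -
  have "((\<lambda>s. c * s) \<longlongrightarrow> (\<lambda>s. c * s) 0) (nhds 0)"
    by (rule tendsto_at_iff_tendsto_nhds[THEN iffD1]) (intro tendsto_intros)
  thus ?thesis using assms by (simp add: filterlim_iff)
qed

section \<open>Convexity of the negative log-likelihood\<close>

definition partition_fun ::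
  "nat \<Rightarrow> (nat \<Rightarrow> real) set \<Rightarrow> (nat \<Rightarrow> nat \<Rightarrow> real) \<Rightarrow> (nat \<Rightarrow> real) \<Rightarrow> ennreal" where
  "partition_fun d S \<Theta> v =
     (\<integral>\<^sup>+ z. indicator S z * ennreal (exp (- (1/2) * qf d \<Theta> z + ip d z v)) \<partial>lebd d)"

definition sample_term ::
  "nat \<Rightarrow> nat \<Rightarrow> (nat \<Rightarrow> nat \<Rightarrow> real) \<Rightarrow> (nat \<Rightarrow> nat \<Rightarrow> real) \<Rightarrow> (nat \<Rightarrow> real) \<Rightarrow> real" where
  "sample_term d n xs \<Theta> v = (1 / real n) * (\<Sum>i\<in>{1..n}. (1/2) * qf d \<Theta> (xs i) - ip d (xs i) v)"

lemma lnll_eq_sample_term: "lnll d S n xs \<Theta> v = ereal (sample_term d n xs \<Theta> v) + log_part d S \<Theta> v"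
  unfolding lnll_def sample_term_def ..

lemma log_part_eq_partition_fun:
  "log_part d S \<Theta> v =
     (if partition_fun d S \<Theta> v = \<infinity> then \<infinity> else if partition_fun d S \<Theta> v = 0 then - \<infinity>
      else ereal (ln (enn2real (partition_fun d S \<Theta> v))))"
  unfolding log_part_def partition_fun_def Let_def ..

lemma lnll_cong:
  assumes "\<And>z. qf d \<Theta> z = qf d \<Theta>' z" and "\<And>z. ip d z v = ip d z v'"
  shows "lnll d S n xs \<Theta> v = lnll d S n xs \<Theta>' v'"
  unfolding lnll_def log_part_def using assms by simp

lemma measurable_qf [measurable]: "(\<lambda>z. qf d \<Theta> z) \<in> borel_measurable (lebd d)"
  unfolding qf_def lebd_def by measurable

lemma measurable_ip [measurable]: "(\<lambda>z. ip d z v) \<in> borel_measurable (lebd d)"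
  unfolding ip_def lebd_def by measurable

lemma lnll_eq_minf_iff:
  assumes "S \<in> sets (lebd d)"
  shows "lnll d S n xs \<Theta> v = - \<infinity> \<longleftrightarrow> (AE z in lebd d. z \<notin> S)"
proof -
  have "lnll d S n xs \<Theta> v = - \<infinity> \<longleftrightarrow> partition_fun d S \<Theta> v = 0"
    unfolding lnll_eq_sample_term log_part_eq_partition_fun by auto
  also have "\<dots> \<longleftrightarrow> (AE z in lebd d. z \<notin> S)"
    unfolding partition_fun_def using assms by (subst nn_integral_0_iff_AE) (auto simp: indicator_def)
  finally show ?thesis .
qed

lemma lnll_finiteD:
  assumes "\<bar>lnll d S n xs \<Theta> v\<bar> \<noteq> \<infinity>"
  shows "partition_fun d S \<Theta> v = ennreal (enn2real (partition_fun d S \<Theta> v))"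
    and "0 < enn2real (partition_fun d S \<Theta> v)"
    and "lnll d S n xs \<Theta> v = ereal (sample_term d n xs \<Theta> v + ln (enn2real (partition_fun d S \<Theta> v)))"
  using assms unfolding lnll_eq_sample_term log_part_eq_partition_fun
  by (auto split: if_splits simp: enn2real_positive_iff less_top[symmetric] zero_less_iff_neq_zero)

lemma exp_convex_comb_le:
  fixes \<alpha> X y :: "'i \<Rightarrow> real"
  assumes I: "finite I" and \<alpha>: "\<And>k. k \<in> I \<Longrightarrow> 0 \<le> \<alpha> k" "sum \<alpha> I = 1"
    and X: "\<And>k. k \<in> I \<Longrightarrow> 0 < X k"
  shows "exp (\<Sum>k\<in>I. \<alpha> k * y k) \<le> exp (\<Sum>k\<in>I. \<alpha> k * ln (X k)) * (\<Sum>k\<in>I. \<alpha> k / X k * exp (y k))"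
proof -
  let ?C = "exp (\<Sum>k\<in>I. \<alpha> k * ln (X k))"
  have "I \<noteq> {}" using \<alpha>(2) by auto
  have "exp (\<Sum>k\<in>I. \<alpha> k * y k) = ?C * exp (\<Sum>k\<in>I. \<alpha> k * (y k - ln (X k)))"
    by (simp add: exp_add[symmetric] algebra_simps sum_subtractf)
  also have "\<dots> \<le> ?C * (\<Sum>k\<in>I. \<alpha> k * exp (y k - ln (X k)))"
    using convex_on_sum[OF I \<open>I \<noteq> {}\<close> exp_convex \<alpha>(2), of "\<lambda>k. y k - ln (X k)"] \<alpha>(1) by simp
  also have "\<dots> = ?C * (\<Sum>k\<in>I. \<alpha> k / X k * exp (y k))"
    using X by (simp add: exp_diff)
  finally show ?thesis .
qed

text \<open>Integrating the weighted AM-GM bound gives exactly the geometric mean of the integrals.\<close>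
lemma nn_integral_exp_convex_comb_le:
  fixes M :: "'a measure" and E :: "'i \<Rightarrow> 'a \<Rightarrow> real" and \<alpha> X :: "'i \<Rightarrow> real"
  assumes I: "finite I" and \<alpha>: "\<And>k. k \<in> I \<Longrightarrow> 0 \<le> \<alpha> k" "sum \<alpha> I = 1"
    and S: "S \<in> sets M" and E: "\<And>k. k \<in> I \<Longrightarrow> E k \<in> borel_measurable M"
    and X: "\<And>k. k \<in> I \<Longrightarrow> (\<integral>\<^sup>+ z. indicator S z * ennreal (exp (E k z)) \<partial>M) = ennreal (X k)"
    and X_pos: "\<And>k. k \<in> I \<Longrightarrow> 0 < X k"
  shows "(\<integral>\<^sup>+ z. indicator S z * ennreal (exp (\<Sum>k\<in>I. \<alpha> k * E k z)) \<partial>M)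
           \<le> ennreal (exp (\<Sum>k\<in>I. \<alpha> k * ln (X k)))"
proof -
  define C where "C = exp (\<Sum>k\<in>I. \<alpha> k * ln (X k))"
  define c where "c k = C * \<alpha> k / X k" for k
  have c_nonneg: "0 \<le> c k" if "k \<in> I" for k
    using \<alpha>(1)[OF that] X_pos[OF that] by (simp add: c_def C_def)
  have pointwise: "exp (\<Sum>k\<in>I. \<alpha> k * E k z) \<le> (\<Sum>k\<in>I. c k * exp (E k z))" for z
    using exp_convex_comb_le[OF I \<alpha> X_pos, where y="\<lambda>k. E k z"]
    by (simp add: C_def c_def sum_distrib_left mult.assoc)
  have "(\<integral>\<^sup>+ z. indicator S z * ennreal (exp (\<Sum>k\<in>I. \<alpha> k * E k z)) \<partial>M)
      \<le> (\<integral>\<^sup>+ z. (\<Sum>k\<in>I. ennreal (c k) * (indicator S z * ennreal (exp (E k z)))) \<partial>M)"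
  proof (rule nn_integral_mono)
    fix z
    have "indicator S z * ennreal (exp (\<Sum>k\<in>I. \<alpha> k * E k z))
        \<le> indicator S z * ennreal (\<Sum>k\<in>I. c k * exp (E k z))"
      using pointwise[of z] by (intro mult_left_mono ennreal_leI) auto
    also have "\<dots> = (\<Sum>k\<in>I. ennreal (c k) * (indicator S z * ennreal (exp (E k z))))"
      using c_nonneg
      by (simp add: sum_ennreal[symmetric] ennreal_mult' sum_distrib_left indicator_def mult.commute)
    finally show "indicator S z * ennreal (exp (\<Sum>k\<in>I. \<alpha> k * E k z))
        \<le> (\<Sum>k\<in>I. ennreal (c k) * (indicator S z * ennreal (exp (E k z))))" .
  qed
  also have "\<dots> = (\<Sum>k\<in>I. ennreal (c k) * ennreal (X k))"
    using S E X by (subst nn_integral_sum) (auto intro!: sum.cong simp: nn_integral_cmult)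
  also have "\<dots> = (\<Sum>k\<in>I. ennreal (C * \<alpha> k))"
  proof (rule sum.cong)
    fix k assume k: "k \<in> I"
    have "c k * X k = C * \<alpha> k" using X_pos[OF k] by (simp add: c_def)
    thus "ennreal (c k) * ennreal (X k) = ennreal (C * \<alpha> k)"
      using ennreal_mult'[OF c_nonneg[OF k], of "X k"] by simp
  qed simp
  also have "\<dots> = ennreal C"
    using \<alpha> by (simp add: sum_ennreal C_def sum_distrib_left[symmetric])
  finally show ?thesis unfolding C_def .
qed

lemma sample_term_convex_comb:
  assumes Q: "\<And>z. qf d \<Theta> z = (\<Sum>k\<in>I. \<alpha> k * qf d (\<Theta>k k) z)"
    and P: "\<And>z. ip d z v = (\<Sum>k\<in>I. \<alpha> k * ip d z (vk k))"
  shows "sample_term d n xs \<Theta> v = (\<Sum>k\<in>I. \<alpha> k * sample_term d n xs (\<Theta>k k) (vk k))"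
proof -
  have "sample_term d n xs \<Theta> v
      = (1 / real n) * (\<Sum>i\<in>{1..n}. \<Sum>k\<in>I. \<alpha> k * ((1/2) * qf d (\<Theta>k k) (xs i) - ip d (xs i) (vk k)))"
    unfolding sample_term_def Q P
    by (simp add: sum_distrib_left sum_subtractf[symmetric] algebra_simps)
  also have "\<dots> = (\<Sum>k\<in>I. \<alpha> k * sample_term d n xs (\<Theta>k k) (vk k))"
    unfolding sample_term_def sum.swap[of _ "{1..n}"]
    by (simp add: sum_distrib_left mult.assoc mult.left_commute sum.swap[of _ I])
  finally show ?thesis .
qed

text \<open>The log-partition part is Hoelder's inequality.\<close>
lemma lnll_le_convex_comb:
  fixes I :: "'i set" and \<alpha> :: "'i \<Rightarrow> real"
  assumes S: "S \<in> sets (lebd d)" and I: "finite I"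
    and \<alpha>: "\<And>k. k \<in> I \<Longrightarrow> 0 \<le> \<alpha> k" "sum \<alpha> I = 1"
    and fin: "\<And>k. k \<in> I \<Longrightarrow> \<bar>lnll d S n xs (\<Theta>k k) (vk k)\<bar> \<noteq> \<infinity>"
    and Q: "\<And>z. qf d \<Theta> z = (\<Sum>k\<in>I. \<alpha> k * qf d (\<Theta>k k) z)"
    and P: "\<And>z. ip d z v = (\<Sum>k\<in>I. \<alpha> k * ip d z (vk k))"
  shows "lnll d S n xs \<Theta> v \<le> ereal (\<Sum>k\<in>I. \<alpha> k * real_of_ereal (lnll d S n xs (\<Theta>k k) (vk k)))"
proof -
  define X where "X k = enn2real (partition_fun d S (\<Theta>k k) (vk k))" for k
  note X = lnll_finiteD[OF fin, folded X_def]
  have "partition_fun d S \<Theta> v = (\<integral>\<^sup>+ z. indicator S z *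
      ennreal (exp (\<Sum>k\<in>I. \<alpha> k * (- (1/2) * qf d (\<Theta>k k) z + ip d z (vk k)))) \<partial>lebd d)"
    unfolding partition_fun_def Q P
    by (simp add: sum_distrib_left algebra_simps sum.distrib sum_subtractf sum_negf)
  also have "\<dots> \<le> ennreal (exp (\<Sum>k\<in>I. \<alpha> k * ln (X k)))"
    using X(1,2) by (intro nn_integral_exp_convex_comb_le[OF I \<alpha> S]) (auto simp: partition_fun_def)
  finally have Z_le: "partition_fun d S \<Theta> v \<le> ennreal (exp (\<Sum>k\<in>I. \<alpha> k * ln (X k)))" .
  show ?thesis
  proof (cases "partition_fun d S \<Theta> v = 0")
    case True
    thus ?thesis by (simp add: lnll_eq_sample_term log_part_eq_partition_fun)
  next
    case False
    let ?Z = "enn2real (partition_fun d S \<Theta> v)"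
    have Z_fin: "partition_fun d S \<Theta> v \<noteq> \<infinity>" using Z_le by (auto simp: top_unique)
    hence "0 < ?Z" using False by (simp add: enn2real_positive_iff less_top zero_less_iff_neq_zero)
    moreover have "?Z \<le> exp (\<Sum>k\<in>I. \<alpha> k * ln (X k))" using enn2real_mono[OF Z_le] by simp
    ultimately have ln_Z: "ln ?Z \<le> (\<Sum>k\<in>I. \<alpha> k * ln (X k))"
      by (metis exp_le_cancel_iff exp_ln)
    have "lnll d S n xs \<Theta> v = ereal (sample_term d n xs \<Theta> v + ln ?Z)"
      using False Z_fin by (simp add: lnll_eq_sample_term log_part_eq_partition_fun)
    also have "\<dots> \<le> ereal (\<Sum>k\<in>I. \<alpha> k * (sample_term d n xs (\<Theta>k k) (vk k) + ln (X k)))"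
      using ln_Z by (simp add: sample_term_convex_comb[OF Q P] distrib_left sum.distrib)
    also have "\<dots> = ereal (\<Sum>k\<in>I. \<alpha> k * real_of_ereal (lnll d S n xs (\<Theta>k k) (vk k)))"
      using X(3) by (auto intro!: sum.cong)
    finally show ?thesis .
  qed
qed

lemma lnll_convex:
  assumes S: "S \<in> sets (lebd d)" and \<tau>: "0 \<le> \<tau>" "\<tau> \<le> 1"
    and fin0: "\<bar>lnll d S n xs \<Theta> v\<bar> \<noteq> \<infinity>"
    and fin1: "\<bar>lnll d S n xs (\<lambda>a b. \<Theta> a b + H a b) (\<lambda>a. v a + w a)\<bar> \<noteq> \<infinity>"
  shows "lnll d S n xs (\<lambda>a b. \<Theta> a b + \<tau> * H a b) (\<lambda>a. v a + \<tau> * w a)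
    \<le> ereal (\<tau> * real_of_ereal (lnll d S n xs (\<lambda>a b. \<Theta> a b + H a b) (\<lambda>a. v a + w a))
             + (1 - \<tau>) * real_of_ereal (lnll d S n xs \<Theta> v))"
  using lnll_le_convex_comb[OF S, of UNIV "\<lambda>b. if b then \<tau> else 1 - \<tau>" n xs
      "\<lambda>b. if b then (\<lambda>a b. \<Theta> a b + H a b) else \<Theta>" "\<lambda>b. if b then (\<lambda>a. v a + w a) else v"] \<tau> fin0 fin1
  by (simp add: UNIV_bool qf_add qf_cmult ip_add ip_cmult algebra_simps)

section \<open>Strong convexity along lines\<close>

lemma hess_ge_line_finite:
  assumes "hess_ge d \<kappa> f \<Theta> v" "sym_mat d H"
  shows "\<forall>\<^sub>F s in nhds 0. \<bar>f (\<lambda>a b. \<Theta> a b + s * H a b) (\<lambda>a. v a + s * w a)\<bar> \<noteq> \<infinity>"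
  using assms unfolding hess_ge_def Let_def by blast

lemma hess_ge_line_second_deriv:
  assumes "hess_ge d \<kappa> f \<Theta> v" "sym_mat d H"
  shows "\<exists>\<phi>1 \<phi>2.
    (\<forall>\<^sub>F s in nhds 0. ((\<lambda>t. real_of_ereal (f (\<lambda>a b. \<Theta> a b + t * H a b) (\<lambda>a. v a + t * w a)))
        has_real_derivative \<phi>1 s) (at s)) \<and>
    (\<phi>1 has_real_derivative \<phi>2) (at 0) \<and> \<kappa> * ((frob d H)\<^sup>2 + (norm2 d w)\<^sup>2) \<le> \<phi>2"
  using assms unfolding hess_ge_def Let_def by blast

lemma hess_ge_line_DERIV:
  assumes "hess_ge d \<kappa> f \<Theta> v" "sym_mat d H"
  shows "\<exists>g1. ((\<lambda>s. real_of_ereal (f (\<lambda>a b. \<Theta> a b + s * H a b) (\<lambda>a. v a + s * w a)))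
    has_real_derivative g1) (at 0)"
  using hess_ge_line_second_deriv[OF assms, of w] by (blast dest: eventually_nhds_x_imp_x)

lemma hess_ge_segment_taylor:
  fixes f :: "(nat \<Rightarrow> nat \<Rightarrow> real) \<Rightarrow> (nat \<Rightarrow> real) \<Rightarrow> ereal"
    and \<Theta> H :: "nat \<Rightarrow> nat \<Rightarrow> real" and v w :: "nat \<Rightarrow> real"
  defines "g \<equiv> \<lambda>s. real_of_ereal (f (\<lambda>a b. \<Theta> a b + s * H a b) (\<lambda>a. v a + s * w a))"
  assumes H: "sym_mat d H" and T: "0 \<le> T"
    and hess: "\<And>s. 0 \<le> s \<Longrightarrow> s \<le> T \<Longrightarrow> hess_ge d \<kappa> f (\<lambda>a b. \<Theta> a b + s * H a b) (\<lambda>a. v a + s * w a)"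
    and g1: "(g has_real_derivative g1) (at 0)"
  shows "g 0 + T * g1 + \<kappa> * ((frob d H)\<^sup>2 + (norm2 d w)\<^sup>2) * T\<^sup>2 / 2 \<le> g T"
proof (rule quadratic_lower_bound_from_second_derivative[OF T g1])
  fix s0 assume s0: "0 \<le> s0" "s0 \<le> T"
  have g_shift: "(\<lambda>t. g (s0 + t))
      = (\<lambda>t. real_of_ereal (f (\<lambda>a b. \<Theta> a b + s0 * H a b + t * H a b) (\<lambda>a. v a + s0 * w a + t * w a)))"
    unfolding g_def by (simp add: algebra_simps)
  from hess_ge_line_second_deriv[OF hess[OF s0] H, of w]
  show "\<exists>\<phi>1 \<phi>2. (\<forall>\<^sub>F s in nhds 0. ((\<lambda>t. g (s0 + t)) has_real_derivative \<phi>1 s) (at s)) \<and>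
      (\<phi>1 has_real_derivative \<phi>2) (at 0) \<and> \<kappa> * ((frob d H)\<^sup>2 + (norm2 d w)\<^sup>2) \<le> \<phi>2"
    unfolding g_shift .
qed

section \<open>Partial derivatives and the gradient\<close>

definition coords :: "nat \<Rightarrow> ((nat \<times> nat) + nat) set" where
  "coords d = ({..<d} \<times> {..<d}) <+> {..<d}"

definition coord_mat :: "(nat \<Rightarrow> nat \<Rightarrow> real) \<Rightarrow> (nat \<times> nat) + nat \<Rightarrow> real \<Rightarrow> (nat \<Rightarrow> nat \<Rightarrow> real)" where
  "coord_mat \<Theta> k t =
     (case k of Inl (i, j) \<Rightarrow> (\<lambda>a b. \<Theta> a b + (if a = i \<and> b = j then t else 0)) | Inr _ \<Rightarrow> \<Theta>)"

definition coord_vec :: "(nat \<Rightarrow> real) \<Rightarrow> (nat \<times> nat) + nat \<Rightarrow> real \<Rightarrow> (nat \<Rightarrow> real)" where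
  "coord_vec v k t = (case k of Inl _ \<Rightarrow> v | Inr i \<Rightarrow> (\<lambda>a. v a + (if a = i then t else 0)))"

definition coord_comp :: "(nat \<Rightarrow> nat \<Rightarrow> real) \<Rightarrow> (nat \<Rightarrow> real) \<Rightarrow> (nat \<times> nat) + nat \<Rightarrow> real" where
  "coord_comp H w k = (case k of Inl (i, j) \<Rightarrow> H i j | Inr i \<Rightarrow> w i)"

lemma finite_coords [simp]: "finite (coords d)"
  unfolding coords_def by simp

lemma card_coords: "card (coords d) = d * d + d"
  unfolding coords_def by (simp add: card_Plus card_cartesian_product)

lemma sum_coords: "(\<Sum>k\<in>coords d. g k) = (\<Sum>i<d. \<Sum>j<d. g (Inl (i, j))) + (\<Sum>i<d. g (Inr i))"
  unfolding coords_def
  by (subst sum.Plus) (simp_all add: sum.cartesian_product comp_def case_prod_beta')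

lemma coord_mat_0 [simp]: "coord_mat \<Theta> k 0 = \<Theta>"
  by (auto simp: coord_mat_def split: sum.split)

lemma coord_vec_0 [simp]: "coord_vec v k 0 = v"
  by (auto simp: coord_vec_def split: sum.split)

lemma qf_coord_mat:
  assumes "k \<in> coords d"
  shows "qf d (coord_mat \<Theta> k t) z = qf d \<Theta> z + (case k of Inl (i, j) \<Rightarrow> z i * t * z j | Inr _ \<Rightarrow> 0)"
proof (cases k)
  case (Inl p)
  with assms obtain i j where "k = Inl (i, j)" "i < d" "j < d" by (cases p) (auto simp: coords_def)
  thus ?thesis by (simp add: coord_mat_def qf_add qf_single)
qed (simp add: coord_mat_def)

lemma ip_coord_vec:
  assumes "k \<in> coords d"
  shows "ip d z (coord_vec v k t) = ip d z v + (case k of Inl _ \<Rightarrow> 0 | Inr i \<Rightarrow> z i * t)"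
proof (cases k)
  case (Inr i)
  with assms have "i < d" by (auto simp: coords_def)
  thus ?thesis using Inr by (simp add: coord_vec_def ip_add ip_single)
qed (simp add: coord_vec_def)

text \<open>A step along the (i, j) entry of Theta leaves the symmetric matrices, but l_n sees only the
  symmetric part of Theta, so the step equals one along a symmetric direction, where the
  Hessian hypothesis applies.\<close>
lemma lnll_coord_partial:
  assumes hess: "hess_ge d \<kappa> (lnll d S n xs) \<Theta> v" and k: "k \<in> coords d"
  shows "\<exists>D. ((\<lambda>t. real_of_ereal (lnll d S n xs (coord_mat \<Theta> k t) (coord_vec v k t)))
           has_real_derivative D) (at 0)"
    and "\<forall>\<^sub>F t in nhds 0. \<bar>lnll d S n xs (coord_mat \<Theta> k t) (coord_vec v k t)\<bar> \<noteq> \<infinity>"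
proof -
  obtain H w where H: "sym_mat d H" and line: "\<And>t. lnll d S n xs (\<lambda>a b. \<Theta> a b + t * H a b) (\<lambda>a. v a + t * w a)
      = lnll d S n xs (coord_mat \<Theta> k t) (coord_vec v k t)"
  proof (cases k)
    case (Inl p)
    then obtain i j where k_ij: "k = Inl (i, j)" "i < d" "j < d"
      using k by (cases p) (auto simp: coords_def)
    define H where "H a b = (if a = i \<and> b = j then 1/2 else 0) + (if a = j \<and> b = i then 1/2 else (0::real))"
      for a b
    have "H a b = H b a" for a b
      unfolding H_def by (cases "a = i"; cases "b = j"; cases "a = j"; cases "b = i") simp_all
    hence H_sym: "sym_mat d H" unfolding sym_mat_def by blast
    have qf_H: "qf d H z = z i * (1/2) * z j + z j * (1/2) * z i" for z
      unfolding H_def qf_add using k_ij by (simp add: qf_single)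
    have "lnll d S n xs (\<lambda>a b. \<Theta> a b + t * H a b) (\<lambda>a. v a + t * 0)
        = lnll d S n xs (coord_mat \<Theta> k t) (coord_vec v k t)" for t
    proof (rule lnll_cong)
      show "qf d (\<lambda>a b. \<Theta> a b + t * H a b) z = qf d (coord_mat \<Theta> k t) z" for z
        using k k_ij by (simp add: qf_coord_mat qf_add qf_cmult qf_H algebra_simps)
      show "ip d z (\<lambda>a. v a + t * 0) = ip d z (coord_vec v k t)" for z
        using k_ij by (simp add: coord_vec_def)
    qed
    with H_sym show ?thesis by (rule that)
  next
    case (Inr i)
    have "sym_mat d (\<lambda>a b. 0)" unfolding sym_mat_def by simp
    moreover have "lnll d S n xs (\<lambda>a b. \<Theta> a b + t * 0) (\<lambda>a. v a + t * (if a = i then 1 else 0))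
        = lnll d S n xs (coord_mat \<Theta> k t) (coord_vec v k t)" for t
      unfolding coord_mat_def coord_vec_def Inr by (simp add: if_distrib[of "\<lambda>x. t * x"] cong: if_cong)
    ultimately show ?thesis by (rule that)
  qed
  show "\<exists>D. ((\<lambda>t. real_of_ereal (lnll d S n xs (coord_mat \<Theta> k t) (coord_vec v k t)))
           has_real_derivative D) (at 0)"
    using hess_ge_line_DERIV[OF hess H, of w] unfolding line .
  show "\<forall>\<^sub>F t in nhds 0. \<bar>lnll d S n xs (coord_mat \<Theta> k t) (coord_vec v k t)\<bar> \<noteq> \<infinity>"
    using hess_ge_line_finite[OF hess H, of w] unfolding line .
qed

lemma grad_inf_nonneg: "0 \<le> grad_inf d f \<Theta> v"
  unfolding grad_inf_def by (rule Max_ge) auto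

lemma abs_coord_deriv_le_grad_inf:
  assumes k: "k \<in> coords d"
    and D: "((\<lambda>t. real_of_ereal (f (coord_mat \<Theta> k t) (coord_vec v k t))) has_real_derivative D) (at 0)"
  shows "\<bar>D\<bar> \<le> grad_inf d f \<Theta> v"
  unfolding grad_inf_def
proof (rule Max_ge)
  have "D = deriv (\<lambda>t. real_of_ereal (f (coord_mat \<Theta> k t) (coord_vec v k t))) 0"
    using DERIV_imp_deriv[OF D] ..
  thus "\<bar>D\<bar> \<in> insert 0
     ((\<lambda>(i,j). \<bar>deriv (\<lambda>t. real_of_ereal (f (\<lambda>a b. \<Theta> a b + (if a = i \<and> b = j then t else 0)) v)) 0\<bar>)
        ` ({..<d} \<times> {..<d})
      \<union> (\<lambda>i. \<bar>deriv (\<lambda>t. real_of_ereal (f \<Theta> (\<lambda>a. v a + (if a = i then t else 0)))) 0\<bar>) ` {..<d})"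
    using k by (cases k) (auto simp: coords_def coord_mat_def coord_vec_def)
qed simp

lemma sum_abs_coord_comp:
  "(\<Sum>k\<in>coords d. \<bar>coord_comp H w k\<bar>) = (\<Sum>i<d. \<Sum>j<d. \<bar>H i j\<bar>) + (\<Sum>i<d. \<bar>w i\<bar>)"
  by (simp add: sum_coords coord_comp_def)

lemma qf_coord_average:
  assumes N: "N = real (card (coords d))" "0 < N"
  shows "qf d (\<lambda>a b. \<Theta> a b + s * H a b) z
    = (\<Sum>k\<in>coords d. (1/N) * qf d (coord_mat \<Theta> k (s * N * coord_comp H w k)) z)"
proof -
  have step: "(1/N) * (z i * (s * N * H i j) * z j) = s * (z i * H i j * z j)" for i j
    using N(2) by simp
  have const: "(\<Sum>k\<in>coords d. (1/N) * qf d \<Theta> z) = qf d \<Theta> z"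
    using N by (simp add: card_gt_0_iff)
  have lin: "(\<Sum>k\<in>coords d. (1/N) * (case k of Inl (i, j) \<Rightarrow> z i * (s * N * H i j) * z j | Inr _ \<Rightarrow> 0))
      = (\<Sum>i<d. \<Sum>j<d. s * (z i * H i j * z j))"
    by (simp only: sum_coords sum.case prod.case step mult_zero_right sum.neutral_const add.right_neutral)
  have "(\<Sum>k\<in>coords d. (1/N) * qf d (coord_mat \<Theta> k (s * N * coord_comp H w k)) z)
      = (\<Sum>k\<in>coords d. (1/N) * qf d \<Theta> z
          + (1/N) * (case k of Inl (i, j) \<Rightarrow> z i * (s * N * H i j) * z j | Inr _ \<Rightarrow> 0))"
    by (intro sum.cong refl) (auto simp: qf_coord_mat coord_comp_def distrib_left split: sum.split)
  also have "\<dots> = qf d \<Theta> z + (\<Sum>i<d. \<Sum>j<d. s * (z i * H i j * z j))"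
    by (simp only: sum.distrib const lin)
  also have "\<dots> = qf d (\<lambda>a b. \<Theta> a b + s * H a b) z"
    by (simp add: qf_add qf_cmult qf_def[of d H] sum_distrib_left)
  finally show ?thesis ..
qed

lemma ip_coord_average:
  assumes N: "N = real (card (coords d))" "0 < N"
  shows "ip d z (\<lambda>a. v a + s * w a)
    = (\<Sum>k\<in>coords d. (1/N) * ip d z (coord_vec v k (s * N * coord_comp H w k)))"
proof -
  have step: "(1/N) * (z i * (s * N * w i)) = s * (z i * w i)" for i
    using N(2) by simp
  have const: "(\<Sum>k\<in>coords d. (1/N) * ip d z v) = ip d z v"
    using N by (simp add: card_gt_0_iff)
  have lin: "(\<Sum>k\<in>coords d. (1/N) * (case k of Inl _ \<Rightarrow> 0 | Inr i \<Rightarrow> z i * (s * N * w i)))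
      = (\<Sum>i<d. s * (z i * w i))"
    by (simp only: sum_coords sum.case prod.case step mult_zero_right sum.neutral_const add.left_neutral)
  have "(\<Sum>k\<in>coords d. (1/N) * ip d z (coord_vec v k (s * N * coord_comp H w k)))
      = (\<Sum>k\<in>coords d. (1/N) * ip d z v
          + (1/N) * (case k of Inl _ \<Rightarrow> 0 | Inr i \<Rightarrow> z i * (s * N * w i)))"
    by (intro sum.cong refl) (auto simp: ip_coord_vec coord_comp_def distrib_left split: sum.split)
  also have "\<dots> = ip d z v + (\<Sum>i<d. s * (z i * w i))"
    by (simp only: sum.distrib const lin)
  also have "\<dots> = ip d z (\<lambda>a. v a + s * w a)"
    by (simp add: ip_add ip_cmult ip_def[of d z w] sum_distrib_left)
  finally show ?thesis ..
qed

lemma lnll_line_le_coord_average: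
  fixes d :: nat
  defines "N \<equiv> real (card (coords d))"
  assumes S: "S \<in> sets (lebd d)" and d: "0 < d"
    and hess: "hess_ge d \<kappa> (lnll d S n xs) \<Theta> v" and H: "sym_mat d H"
  shows "\<forall>\<^sub>F s in nhds 0. real_of_ereal (lnll d S n xs (\<lambda>a b. \<Theta> a b + s * H a b) (\<lambda>a. v a + s * w a))
    \<le> (\<Sum>k\<in>coords d. (1/N) * real_of_ereal (lnll d S n xs
          (coord_mat \<Theta> k (s * N * coord_comp H w k)) (coord_vec v k (s * N * coord_comp H w k))))"
proof -
  let ?f = "lnll d S n xs" and ?K = "coords d" and ?m = "coord_comp H w"
  have N: "0 < N" using d unfolding N_def card_coords of_nat_0_less_iff by simp
  have "\<forall>\<^sub>F s in nhds 0. \<forall>k\<in>?K. \<bar>?f (coord_mat \<Theta> k (s * N * ?m k)) (coord_vec v k (s * N * ?m k))\<bar> \<noteq> \<infinity>"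
  proof (intro eventually_ball_finite ballI finite_coords)
    fix k assume "k \<in> ?K"
    from eventually_nhds_0_scale[OF lnll_coord_partial(2)[OF hess this], of "N * ?m k"]
    show "\<forall>\<^sub>F s in nhds 0. \<bar>?f (coord_mat \<Theta> k (s * N * ?m k)) (coord_vec v k (s * N * ?m k))\<bar> \<noteq> \<infinity>"
      by (simp add: ac_simps)
  qed
  thus ?thesis using hess_ge_line_finite[OF hess H, of w]
  proof eventually_elim
    case (elim s)
    have "?f (\<lambda>a b. \<Theta> a b + s * H a b) (\<lambda>a. v a + s * w a) \<le> ereal (\<Sum>k\<in>?K.
        (1/N) * real_of_ereal (?f (coord_mat \<Theta> k (s * N * ?m k)) (coord_vec v k (s * N * ?m k))))"
    proof (rule lnll_le_convex_comb[OF S finite_coords])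
      show "\<And>k. k \<in> ?K \<Longrightarrow> 0 \<le> 1/N" using N by simp
      show "(\<Sum>k\<in>?K. 1/N) = 1" using N by (simp add: N_def card_gt_0_iff)
      show "\<And>k. k \<in> ?K \<Longrightarrow> \<bar>?f (coord_mat \<Theta> k (s * N * ?m k)) (coord_vec v k (s * N * ?m k))\<bar> \<noteq> \<infinity>"
        using elim(1) by simp
      show "\<And>z. qf d (\<lambda>a b. \<Theta> a b + s * H a b) z
          = (\<Sum>k\<in>?K. (1/N) * qf d (coord_mat \<Theta> k (s * N * ?m k)) z)"
        by (rule qf_coord_average[OF meta_eq_to_obj_eq[OF N_def] N])
      show "\<And>z. ip d z (\<lambda>a. v a + s * w a) = (\<Sum>k\<in>?K. (1/N) * ip d z (coord_vec v k (s * N * ?m k)))"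
        by (rule ip_coord_average[OF meta_eq_to_obj_eq[OF N_def] N])
    qed
    thus ?case using elim(2) by (cases "?f (\<lambda>a b. \<Theta> a b + s * H a b) (\<lambda>a. v a + s * w a)") auto
  qed
qed

text \<open>l_n is only known to be differentiable along lines, so the directional derivative is
  related to the partial derivatives through convexity: along the line, l_n lies below the
  average of the N coordinate steps of N times the size, with equality at 0, so both have the
  same derivative there.\<close>
lemma lnll_directional_deriv_eq:
  assumes S: "S \<in> sets (lebd d)" and d: "0 < d"
    and hess: "hess_ge d \<kappa> (lnll d S n xs) \<Theta> v" and H: "sym_mat d H"
    and g1: "((\<lambda>s. real_of_ereal (lnll d S n xs (\<lambda>a b. \<Theta> a b + s * H a b) (\<lambda>a. v a + s * w a)))
               has_real_derivative g1) (at 0)"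
    and D: "\<And>k. k \<in> coords d \<Longrightarrow>
      ((\<lambda>t. real_of_ereal (lnll d S n xs (coord_mat \<Theta> k t) (coord_vec v k t))) has_real_derivative D k) (at 0)"
  shows "g1 = (\<Sum>k\<in>coords d. D k * coord_comp H w k)"
proof -
  let ?K = "coords d" and ?m = "coord_comp H w"
  define N where "N = real (card ?K)"
  have N: "0 < N" using d unfolding N_def card_coords of_nat_0_less_iff by simp
  define C where "C k t = real_of_ereal (lnll d S n xs (coord_mat \<Theta> k t) (coord_vec v k t))" for k t
  define avg where "avg s = (\<Sum>k\<in>?K. (1/N) * C k (s * N * ?m k))" for s
  have "((\<lambda>s. C k (s * N * ?m k)) has_real_derivative D k * (N * ?m k)) (at 0)" if "k \<in> ?K" for k
  proof -
    have "(C k has_real_derivative D k) (at 0)" using D[OF that] unfolding C_def .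
    moreover have "((\<lambda>s. s * N * ?m k) has_real_derivative N * ?m k) (at 0)"
      by (auto intro!: derivative_eq_intros)
    ultimately show ?thesis using DERIV_chain2[of "C k" "D k" "\<lambda>s. s * N * ?m k" 0 "N * ?m k" UNIV]
      by simp
  qed
  hence "(avg has_real_derivative (\<Sum>k\<in>?K. (1/N) * (D k * (N * ?m k)))) (at 0)"
    unfolding avg_def by (intro DERIV_sum DERIV_cmult) auto
  moreover have "(\<Sum>k\<in>?K. (1/N) * (D k * (N * ?m k))) = (\<Sum>k\<in>?K. D k * ?m k)"
    using N by simp
  ultimately have avg': "(avg has_real_derivative (\<Sum>k\<in>?K. D k * ?m k)) (at 0)" by simp
  have "avg 0 = real_of_ereal (lnll d S n xs \<Theta> v)"
    using N by (simp add: avg_def C_def N_def card_gt_0_iff)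
  moreover have "\<forall>\<^sub>F s in nhds 0.
      real_of_ereal (lnll d S n xs (\<lambda>a b. \<Theta> a b + s * H a b) (\<lambda>a. v a + s * w a)) \<le> avg s"
    using lnll_line_le_coord_average[OF S d hess H, of w] unfolding avg_def C_def N_def .
  ultimately show ?thesis by (intro DERIV_eq_if_touching[OF g1 avg']) simp_all
qed

lemma lnll_directional_deriv_ge:
  assumes S: "S \<in> sets (lebd d)" and d: "0 < d"
    and hess: "hess_ge d \<kappa> (lnll d S n xs) \<Theta> v" and H: "sym_mat d H"
    and g1: "((\<lambda>s. real_of_ereal (lnll d S n xs (\<lambda>a b. \<Theta> a b + s * H a b) (\<lambda>a. v a + s * w a)))
               has_real_derivative g1) (at 0)"
  shows "- grad_inf d (lnll d S n xs) \<Theta> v * ((\<Sum>i<d. \<Sum>j<d. \<bar>H i j\<bar>) + (\<Sum>i<d. \<bar>w i\<bar>)) \<le> g1"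
proof -
  let ?G = "grad_inf d (lnll d S n xs) \<Theta> v" and ?m = "coord_comp H w"
  obtain D where D: "\<And>k. k \<in> coords d \<Longrightarrow>
      ((\<lambda>t. real_of_ereal (lnll d S n xs (coord_mat \<Theta> k t) (coord_vec v k t))) has_real_derivative D k) (at 0)"
    using lnll_coord_partial(1)[OF hess] by metis
  have "(\<Sum>k\<in>coords d. - ?G * \<bar>?m k\<bar>) \<le> (\<Sum>k\<in>coords d. D k * ?m k)"
  proof (rule sum_mono)
    fix k assume k: "k \<in> coords d"
    have "\<bar>D k * ?m k\<bar> \<le> ?G * \<bar>?m k\<bar>"
      unfolding abs_mult using abs_coord_deriv_le_grad_inf[OF k D[OF k]] by (rule mult_right_mono) simp
    thus "- ?G * \<bar>?m k\<bar> \<le> D k * ?m k" by linarith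
  qed
  with lnll_directional_deriv_eq[OF S d hess H g1 D] show ?thesis
    by (simp add: sum_abs_coord_comp[symmetric] sum_distrib_left)
qed

section \<open>The off-diagonal penalty\<close>

definition offdiag_l1 :: "nat \<Rightarrow> (nat \<Rightarrow> nat \<Rightarrow> real) \<Rightarrow> real" where
  "offdiag_l1 d \<Theta> = (\<Sum>i<d. \<Sum>j<d. if i \<noteq> j then \<bar>\<Theta> i j\<bar> else 0)"

definition offdiag_l1_slope :: "nat \<Rightarrow> (nat \<Rightarrow> nat \<Rightarrow> real) \<Rightarrow> (nat \<Rightarrow> nat \<Rightarrow> real) \<Rightarrow> real" where
  "offdiag_l1_slope d \<Theta> H =
     (\<Sum>i<d. \<Sum>j<d. if i \<noteq> j then (if \<Theta> i j = 0 then \<bar>H i j\<bar> else - \<bar>H i j\<bar>) else 0)"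

lemma Lnll_eq_offdiag_l1: "Lnll d S n xs lam \<Theta> v = lnll d S n xs \<Theta> v + ereal (lam * offdiag_l1 d \<Theta>)"
  unfolding Lnll_def offdiag_l1_def ..

lemma offdiag_l1_convex:
  assumes "0 \<le> \<tau>" "\<tau> \<le> 1"
  shows "offdiag_l1 d (\<lambda>a b. \<Theta> a b + \<tau> * H a b)
    \<le> \<tau> * offdiag_l1 d (\<lambda>a b. \<Theta> a b + H a b) + (1 - \<tau>) * offdiag_l1 d \<Theta>"
proof -
  have "\<bar>\<Theta> a b + \<tau> * H a b\<bar> \<le> \<tau> * \<bar>\<Theta> a b + H a b\<bar> + (1 - \<tau>) * \<bar>\<Theta> a b\<bar>" for a b
  proof -
    have "\<Theta> a b + \<tau> * H a b = \<tau> * (\<Theta> a b + H a b) + (1 - \<tau>) * \<Theta> a b"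
      by (simp add: algebra_simps)
    also have "\<bar>\<dots>\<bar> \<le> \<bar>\<tau> * (\<Theta> a b + H a b)\<bar> + \<bar>(1 - \<tau>) * \<Theta> a b\<bar>" by (rule abs_triangle_ineq)
    finally show ?thesis using assms by (simp add: abs_mult)
  qed
  hence "offdiag_l1 d (\<lambda>a b. \<Theta> a b + \<tau> * H a b)
      \<le> (\<Sum>i<d. \<Sum>j<d. \<tau> * (if i \<noteq> j then \<bar>\<Theta> i j + H i j\<bar> else 0) + (1 - \<tau>) * (if i \<noteq> j then \<bar>\<Theta> i j\<bar> else 0))"
    unfolding offdiag_l1_def by (intro sum_mono) auto
  also have "\<dots> = \<tau> * offdiag_l1 d (\<lambda>a b. \<Theta> a b + H a b) + (1 - \<tau>) * offdiag_l1 d \<Theta>"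
    unfolding offdiag_l1_def by (simp only: sum.distrib sum_distrib_left)
  finally show ?thesis .
qed

lemma offdiag_l1_increment_ge:
  assumes "0 \<le> \<tau>"
  shows "\<tau> * offdiag_l1_slope d \<Theta> H \<le> offdiag_l1 d (\<lambda>a b. \<Theta> a b + \<tau> * H a b) - offdiag_l1 d \<Theta>"
proof -
  have "\<tau> * (if \<Theta> i j = 0 then \<bar>H i j\<bar> else - \<bar>H i j\<bar>) \<le> \<bar>\<Theta> i j + \<tau> * H i j\<bar> - \<bar>\<Theta> i j\<bar>" for i j
    using assms abs_triangle_ineq2[of "\<Theta> i j" "- \<tau> * H i j"] by (auto simp: abs_mult)
  hence "(\<Sum>i<d. \<Sum>j<d. \<tau> * (if i \<noteq> j then (if \<Theta> i j = 0 then \<bar>H i j\<bar> else - \<bar>H i j\<bar>) else 0))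
      \<le> (\<Sum>i<d. \<Sum>j<d. (if i \<noteq> j then \<bar>\<Theta> i j + \<tau> * H i j\<bar> else 0) - (if i \<noteq> j then \<bar>\<Theta> i j\<bar> else 0))"
    by (intro sum_mono) auto
  thus ?thesis unfolding offdiag_l1_def offdiag_l1_slope_def by (simp add: sum_distrib_left sum_subtractf)
qed

text \<open>Where Theta vanishes the penalty gains at least what the gradient can lose; elsewhere both may
  lose, but since the diagonal of Theta is nonzero, all of those entries lie in its support.\<close>
lemma grad_offdiag_l1_slope_bound:
  assumes diag: "\<forall>i<d. \<Theta> i i \<noteq> 0" and G: "0 \<le> G" "2 * G \<le> lam"
  shows "G * ((\<Sum>i<d. \<Sum>j<d. \<bar>H i j\<bar>) + (\<Sum>i<d. \<bar>w i\<bar>)) - lam * offdiag_l1_slope d \<Theta> H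
    \<le> 3/2 * lam * sqrt (real (nz d \<Theta>)) * (frob d H + norm2 d w)"
proof -
  let ?sq = "sqrt (real (nz d \<Theta>))"
  have entry: "G * \<bar>H i j\<bar> - lam * (if i \<noteq> j then (if \<Theta> i j = 0 then \<bar>H i j\<bar> else - \<bar>H i j\<bar>) else 0)
      \<le> 3/2 * lam * (if \<Theta> i j \<noteq> 0 then \<bar>H i j\<bar> else 0)" if "i < d" for i j
  proof -
    have "2 * (G * \<bar>H i j\<bar>) \<le> lam * \<bar>H i j\<bar>"
      using mult_right_mono[OF G(2) abs_ge_zero[of "H i j"]] by simp
    moreover have "0 \<le> G * \<bar>H i j\<bar>" using G(1) by simp
    ultimately show ?thesis using diag that by (cases "i = j") auto
  qed
  have "G * (\<Sum>i<d. \<Sum>j<d. \<bar>H i j\<bar>) - lam * offdiag_l1_slope d \<Theta> H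
      \<le> 3/2 * lam * (\<Sum>i<d. \<Sum>j<d. if \<Theta> i j \<noteq> 0 then \<bar>H i j\<bar> else 0)"
    using entry unfolding offdiag_l1_slope_def sum_distrib_left sum_subtractf[symmetric]
    by (intro sum_mono) auto
  also have "\<dots> \<le> 3/2 * lam * (?sq * frob d H)"
    using G sum_abs_on_support_le by (intro mult_left_mono) auto
  finally have H_part: "G * (\<Sum>i<d. \<Sum>j<d. \<bar>H i j\<bar>) - lam * offdiag_l1_slope d \<Theta> H
      \<le> 3/2 * lam * (?sq * frob d H)" .
  have "G * (\<Sum>i<d. \<bar>w i\<bar>) \<le> lam / 2 * (sqrt (real d) * norm2 d w)"
    using G sum_abs_le_sqrt_dim by (intro mult_mono) (auto simp: sum_nonneg)
  also have "\<dots> \<le> 3/2 * lam * (?sq * norm2 d w)"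
    using G dim_le_nz[where A=\<Theta>, OF diag] norm2_nonneg[of d w]
    by (intro mult_mono mult_right_mono) (auto simp: mult_nonneg_nonneg)
  finally show ?thesis using H_part by (simp add: algebra_simps)
qed

lemma lnll_minimizer_finite:
  assumes S: "S \<in> sets (lebd d)" and fin: "\<bar>lnll d S n xs \<Theta> v\<bar> \<noteq> \<infinity>"
    and le: "Lnll d S n xs lam \<Theta>' v' \<le> Lnll d S n xs lam \<Theta> v"
  shows "\<bar>lnll d S n xs \<Theta>' v'\<bar> \<noteq> \<infinity>"
proof -
  have "lnll d S n xs \<Theta>' v' \<noteq> \<infinity>"
    using le fin by (cases "lnll d S n xs \<Theta> v") (auto simp: Lnll_eq_offdiag_l1)
  moreover have "lnll d S n xs \<Theta>' v' \<noteq> - \<infinity>"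
    using fin lnll_eq_minf_iff[OF S] by (metis ereal_uminus_uminus abs_ereal_uminus abs_ereal.simps(3))
  ultimately show ?thesis by (cases "lnll d S n xs \<Theta>' v'") auto
qed

lemma lnll_segment_le_of_minimizer:
  assumes S: "S \<in> sets (lebd d)" and \<tau>: "0 \<le> \<tau>" "\<tau> \<le> 1" and lam: "0 \<le> lam"
    and fin: "\<bar>lnll d S n xs \<Theta> v\<bar> \<noteq> \<infinity>"
    and le: "Lnll d S n xs lam (\<lambda>a b. \<Theta> a b + H a b) (\<lambda>a. v a + w a) \<le> Lnll d S n xs lam \<Theta> v"
  shows "real_of_ereal (lnll d S n xs (\<lambda>a b. \<Theta> a b + \<tau> * H a b) (\<lambda>a. v a + \<tau> * w a))
      - real_of_ereal (lnll d S n xs \<Theta> v)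
    \<le> lam * (offdiag_l1 d \<Theta> - offdiag_l1 d (\<lambda>a b. \<Theta> a b + \<tau> * H a b))"
proof -
  let ?\<Theta>1 = "\<lambda>a b. \<Theta> a b + H a b" and ?v1 = "\<lambda>a. v a + w a"
  let ?\<Theta>\<tau> = "\<lambda>a b. \<Theta> a b + \<tau> * H a b" and ?v\<tau> = "\<lambda>a. v a + \<tau> * w a"
  define l0 where "l0 = real_of_ereal (lnll d S n xs \<Theta> v)"
  define l1 where "l1 = real_of_ereal (lnll d S n xs ?\<Theta>1 ?v1)"
  define l\<tau> where "l\<tau> = real_of_ereal (lnll d S n xs ?\<Theta>\<tau> ?v\<tau>)"
  define p0 p1 p\<tau> where "p0 = offdiag_l1 d \<Theta>" and "p1 = offdiag_l1 d ?\<Theta>1" and "p\<tau> = offdiag_l1 d ?\<Theta>\<tau>"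
  have fin1: "\<bar>lnll d S n xs ?\<Theta>1 ?v1\<bar> \<noteq> \<infinity>" by (rule lnll_minimizer_finite[OF S fin le])
  have "lnll d S n xs ?\<Theta>\<tau> ?v\<tau> \<noteq> - \<infinity>"
    using fin lnll_eq_minf_iff[OF S] by (metis ereal_uminus_uminus abs_ereal_uminus abs_ereal.simps(3))
  hence conv: "l\<tau> \<le> \<tau> * l1 + (1 - \<tau>) * l0"
    using lnll_convex[OF S \<tau> fin fin1] unfolding l0_def l1_def l\<tau>_def
    by (cases "lnll d S n xs ?\<Theta>\<tau> ?v\<tau>") auto
  have min: "l1 + lam * p1 \<le> l0 + lam * p0"
    using le fin fin1 unfolding Lnll_eq_offdiag_l1 l0_def l1_def p0_def p1_def
    by (cases "lnll d S n xs ?\<Theta>1 ?v1"; cases "lnll d S n xs \<Theta> v") auto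
  have "lam * p\<tau> \<le> lam * (\<tau> * p1 + (1 - \<tau>) * p0)"
    unfolding p0_def p1_def p\<tau>_def using offdiag_l1_convex[OF \<tau>] lam by (rule mult_left_mono)
  with conv have "l\<tau> + lam * p\<tau> \<le> \<tau> * (l1 + lam * p1) + (1 - \<tau>) * (l0 + lam * p0)"
    by (simp add: algebra_simps)
  also have "\<dots> \<le> \<tau> * (l0 + lam * p0) + (1 - \<tau>) * (l0 + lam * p0)"
    using min \<tau> by (intro add_right_mono mult_left_mono) auto
  finally show ?thesis unfolding l0_def[symmetric] l\<tau>_def[symmetric] p0_def[symmetric] p\<tau>_def[symmetric]
    by (simp add: algebra_simps)
qed

lemma lnll_first_order_bound:
  assumes S: "S \<in> sets (lebd d)" and d: "0 < d" and \<Theta>: "\<forall>i<d. \<Theta> i i \<noteq> 0"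
    and hess: "hess_ge d \<kappa> (lnll d S n xs) \<Theta> v" and H: "sym_mat d H"
    and lam: "2 * grad_inf d (lnll d S n xs) \<Theta> v \<le> lam"
    and g1: "((\<lambda>s. real_of_ereal (lnll d S n xs (\<lambda>a b. \<Theta> a b + s * H a b) (\<lambda>a. v a + s * w a)))
               has_real_derivative g1) (at 0)"
  shows "- g1 - lam * offdiag_l1_slope d \<Theta> H \<le> 3/2 * lam * sqrt (real (nz d \<Theta>)) * (frob d H + norm2 d w)"
proof -
  let ?G = "grad_inf d (lnll d S n xs) \<Theta> v"
  have "0 \<le> ?G" by (rule grad_inf_nonneg)
  from grad_offdiag_l1_slope_bound[where \<Theta>=\<Theta> and H=H and w=w, OF \<Theta> this lam]
    lnll_directional_deriv_ge[OF S d hess H g1]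
  show ?thesis by linarith
qed

lemma minimizer_basic_inequality:
  assumes S: "S \<in> sets (lebd d)" and d: "0 < d"
    and \<Theta>: "\<forall>i<d. \<Theta> i i \<noteq> 0" and H: "sym_mat d H"
    and min: "Lnll d S n xs lam (\<lambda>a b. \<Theta> a b + H a b) (\<lambda>a. v a + w a) \<le> Lnll d S n xs lam \<Theta> v"
    and \<tau>: "0 < \<tau>" "\<tau> \<le> 1"
    and hess: "\<And>s. 0 \<le> s \<Longrightarrow> s \<le> \<tau> \<Longrightarrow>
      hess_ge d \<kappa> (lnll d S n xs) (\<lambda>a b. \<Theta> a b + s * H a b) (\<lambda>a. v a + s * w a)"
    and lam: "2 * grad_inf d (lnll d S n xs) \<Theta> v \<le> lam"
  shows "\<kappa> * \<tau> * ((frob d H)\<^sup>2 + (norm2 d w)\<^sup>2)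
    \<le> 3 * lam * sqrt (real (nz d \<Theta>)) * (frob d H + norm2 d w)"
proof -
  let ?f = "lnll d S n xs"
  define g where "g s = real_of_ereal (?f (\<lambda>a b. \<Theta> a b + s * H a b) (\<lambda>a. v a + s * w a))" for s
  define R where "R = (frob d H)\<^sup>2 + (norm2 d w)\<^sup>2"
  define B where "B = 3/2 * lam * sqrt (real (nz d \<Theta>)) * (frob d H + norm2 d w)"
  define p0 p\<tau> where "p0 = offdiag_l1 d \<Theta>" and "p\<tau> = offdiag_l1 d (\<lambda>a b. \<Theta> a b + \<tau> * H a b)"
  define slope where "slope = offdiag_l1_slope d \<Theta> H"
  have hess0: "hess_ge d \<kappa> ?f \<Theta> v" using hess[of 0] \<tau> by simp
  have lam0: "0 \<le> lam" using grad_inf_nonneg[of d ?f \<Theta> v] lam by simp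
  have fin: "\<bar>?f \<Theta> v\<bar> \<noteq> \<infinity>"
    using eventually_nhds_x_imp_x[OF hess_ge_line_finite[OF hess0 H, of w]] by simp
  obtain g1 where g1: "(g has_real_derivative g1) (at 0)"
    using hess_ge_line_DERIV[OF hess0 H, of w] unfolding g_def by blast
  have "g 0 + \<tau> * g1 + \<kappa> * R * \<tau>\<^sup>2 / 2 \<le> g \<tau>"
    using hess_ge_segment_taylor[OF H _ hess g1[unfolded g_def]] \<tau> unfolding g_def R_def by simp
  moreover have "g \<tau> - g 0 \<le> lam * (p0 - p\<tau>)"
    using lnll_segment_le_of_minimizer[OF S _ \<tau>(2) lam0 fin min] \<tau>
    unfolding g_def p0_def p\<tau>_def by simp
  moreover have "lam * (\<tau> * slope) \<le> lam * (p\<tau> - p0)"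
    using offdiag_l1_increment_ge[of \<tau> d \<Theta> H] \<tau> lam0
    unfolding slope_def p0_def p\<tau>_def by (intro mult_left_mono) auto
  ultimately have "\<kappa> * R * \<tau>\<^sup>2 / 2 \<le> \<tau> * (- g1 - lam * slope)"
    by (simp add: algebra_simps)
  also have "\<dots> \<le> \<tau> * B"
    using lnll_first_order_bound[OF S d \<Theta> hess0 H lam g1[unfolded g_def]] \<tau>
    unfolding slope_def B_def by (intro mult_left_mono) auto
  finally have "\<tau> * (\<kappa> * \<tau> * R) \<le> \<tau> * (2 * B)" by (simp add: power2_eq_square algebra_simps)
  thus ?thesis using \<tau> unfolding R_def B_def by simp
qed

lemma minimizer_error_bound:
  assumes S: "S \<in> sets (lebd d)" and d: "0 < d"
    and \<Theta>s: "sym_mat d \<Theta>s" "\<forall>i<d. \<Theta>s i i \<noteq> 0"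
    and hess: "\<forall>\<Theta> v. sym_mat d \<Theta> \<and>
        (frob d (\<lambda>i j. \<Theta> i j - \<Theta>s i j))\<^sup>2 + (norm2 d (\<lambda>i. v i - vs i))\<^sup>2 \<le> r'\<^sup>2
        \<longrightarrow> hess_ge d \<kappa> (lnll d S n xs) \<Theta> v"
    and \<kappa>: "0 < \<kappa>" and \<epsilon>: "0 < \<epsilon>" "\<epsilon> \<le> r'"
    and lam: "2 * grad_inf d (lnll d S n xs) \<Theta>s vs \<le> lam" "lam * sqrt (real (nz d \<Theta>s)) \<le> \<kappa> * \<epsilon> / 24"
    and \<Theta>t: "sym_mat d \<Theta>t" and min: "Lnll d S n xs lam \<Theta>t vt \<le> Lnll d S n xs lam \<Theta>s vs"
  shows "frob d (\<lambda>i j. \<Theta>t i j - \<Theta>s i j) + norm2 d (\<lambda>i. vt i - vs i) \<le> \<epsilon>"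
proof (rule ccontr)
  define H where "H i j = \<Theta>t i j - \<Theta>s i j" for i j
  define w where "w i = vt i - vs i" for i
  define \<rho> where "\<rho> = sqrt ((frob d H)\<^sup>2 + (norm2 d w)\<^sup>2)"
  define \<tau> where "\<tau> = \<epsilon> / (2 * \<rho>)"
  define sq where "sq = sqrt (real (nz d \<Theta>s))"
  assume "\<not> ?thesis"
  hence "\<epsilon> < frob d H + norm2 d w" unfolding H_def w_def by simp
  moreover have le_\<rho>: "frob d H \<le> \<rho>" "norm2 d w \<le> \<rho>"
    unfolding \<rho>_def by (auto intro!: real_le_rsqrt simp: frob_nonneg norm2_nonneg)
  ultimately have "\<epsilon> < 2 * \<rho>" by linarith
  hence \<rho>: "0 < \<rho>" and \<tau>: "0 < \<tau>" "\<tau> \<le> 1" and \<tau>\<rho>: "\<tau> * \<rho> = \<epsilon> / 2"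
    using \<epsilon> by (auto simp: \<tau>_def)
  have \<rho>2: "\<rho>\<^sup>2 = (frob d H)\<^sup>2 + (norm2 d w)\<^sup>2" unfolding \<rho>_def by simp
  have H: "sym_mat d H" using \<Theta>s(1) \<Theta>t by (simp add: sym_mat_def H_def)
  have "hess_ge d \<kappa> (lnll d S n xs) (\<lambda>a b. \<Theta>s a b + s * H a b) (\<lambda>a. vs a + s * w a)"
    if "0 \<le> s" "s \<le> \<tau>" for s
  proof -
    have "(frob d (\<lambda>i j. s * H i j))\<^sup>2 + (norm2 d (\<lambda>i. s * w i))\<^sup>2 = (s * \<rho>)\<^sup>2"
      by (simp add: frob_cmult norm2_cmult \<rho>2 power_mult_distrib algebra_simps)
    also have "\<dots> \<le> (\<epsilon> / 2)\<^sup>2" unfolding \<tau>\<rho>[symmetric] using that \<rho> by (intro power_mono mult_right_mono) auto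
    also have "\<dots> \<le> r'\<^sup>2" using \<epsilon> by (intro power_mono) auto
    finally show ?thesis using hess \<Theta>s(1) H by (auto simp: sym_mat_def)
  qed
  moreover have "Lnll d S n xs lam (\<lambda>a b. \<Theta>s a b + H a b) (\<lambda>a. vs a + w a) \<le> Lnll d S n xs lam \<Theta>s vs"
    using min by (simp add: H_def w_def)
  ultimately have "\<kappa> * \<tau> * \<rho>\<^sup>2 \<le> 3 * lam * sq * (frob d H + norm2 d w)"
    using minimizer_basic_inequality[OF S d \<Theta>s(2) H _ \<tau> _ lam(1)] unfolding \<rho>2 sq_def by blast
  also have "\<dots> \<le> 3 * lam * sq * (2 * \<rho>)"
    using le_\<rho> lam(1) grad_inf_nonneg[of d "lnll d S n xs" \<Theta>s vs]
    by (intro mult_left_mono) (auto simp: sq_def)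
  finally have "(\<kappa> * (\<tau> * \<rho>)) * \<rho> \<le> (6 * (lam * sq)) * \<rho>" by (simp add: power2_eq_square algebra_simps)
  hence "\<kappa> * (\<epsilon> / 2) \<le> 6 * (lam * sq)" using \<rho> by (simp add: \<tau>\<rho> mult_le_cancel_right_pos)
  also have "\<dots> \<le> 6 * (\<kappa> * \<epsilon> / 24)" using lam(2) unfolding sq_def by (simp add: ac_simps)
  finally show False using \<kappa> \<epsilon> by simp
qed

theorem lemma9:
  shows "\<exists>c>0. \<forall>(d::nat) (S::(nat \<Rightarrow> real) set) (\<mu>s::nat \<Rightarrow> real) (\<Sigma>s::nat \<Rightarrow> nat \<Rightarrow> real)
      (\<Theta>s::nat \<Rightarrow> nat \<Rightarrow> real) (vs::nat \<Rightarrow> real) (n::nat) (xs::nat \<Rightarrow> nat \<Rightarrow> real)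
      (\<kappa>::real) (r'::real) (\<epsilon>::real) (lam::real).
    S \<in> sets (lebd d) \<and>
    pos_def d \<Sigma>s \<and>
    (LINT x:S|lebd d. gauss_density d \<mu>s \<Sigma>s x) > 0 \<and>
    \<Theta>s = mat_inv d \<Sigma>s \<and>
    vs = matvec d \<Theta>s \<mu>s \<and>
    0 < n \<and>
    0 < \<kappa> \<and> 0 < r' \<and>
    (\<forall>\<Theta> v. sym_mat d \<Theta> \<and>
        (frob d (\<lambda>i j. \<Theta> i j - \<Theta>s i j))\<^sup>2 + (norm2 d (\<lambda>i. v i - vs i))\<^sup>2 \<le> r'\<^sup>2
        \<longrightarrow> hess_ge d \<kappa> (lnll d S n xs) \<Theta> v) \<and>
    0 < \<epsilon> \<and> \<epsilon> \<le> r' \<and>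
    2 * grad_inf d (lnll d S n xs) \<Theta>s vs \<le> lam \<and>
    lam \<le> c * \<kappa> * \<epsilon> / sqrt (real (nz d \<Theta>s))
    \<longrightarrow> (\<forall>\<Theta>t vt. sym_mat d \<Theta>t \<and>
          (\<forall>\<Theta> v. sym_mat d \<Theta> \<longrightarrow> Lnll d S n xs lam \<Theta>t vt \<le> Lnll d S n xs lam \<Theta> v)
          \<longrightarrow> frob d (\<lambda>i j. \<Theta>t i j - \<Theta>s i j) + norm2 d (\<lambda>i. vt i - vs i) \<le> \<epsilon>)"
proof ((intro exI[of _ "1/24 :: real"] conjI allI impI; (elim conjE)?), goal_cases)
  case 1
  show ?case by simp
next
  case (2 d S \<mu>s \<Sigma>s \<Theta>s vs n xs \<kappa> r' \<epsilon> lam \<Theta>t vt)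
  hence S: "S \<in> sets (lebd d)" and pd: "pos_def d \<Sigma>s" and \<Theta>s: "\<Theta>s = mat_inv d \<Sigma>s"
    and \<kappa>: "0 < \<kappa>" and \<epsilon>: "0 < \<epsilon>" "\<epsilon> \<le> r'"
    and hess: "\<forall>\<Theta> v. sym_mat d \<Theta> \<and>
        (frob d (\<lambda>i j. \<Theta> i j - \<Theta>s i j))\<^sup>2 + (norm2 d (\<lambda>i. v i - vs i))\<^sup>2 \<le> r'\<^sup>2
        \<longrightarrow> hess_ge d \<kappa> (lnll d S n xs) \<Theta> v"
    and lam: "2 * grad_inf d (lnll d S n xs) \<Theta>s vs \<le> lam"
      "lam \<le> 1/24 * \<kappa> * \<epsilon> / sqrt (real (nz d \<Theta>s))"
    and \<Theta>t: "sym_mat d \<Theta>t"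
    and min: "\<forall>\<Theta> v. sym_mat d \<Theta> \<longrightarrow> Lnll d S n xs lam \<Theta>t vt \<le> Lnll d S n xs lam \<Theta> v"
    by blast+
  show ?case
  proof (cases "d = 0")
    case True
    thus ?thesis using \<epsilon> by (simp add: frob_def norm2_def)
  next
    case False
    have \<Theta>s_sym: "sym_mat d \<Theta>s" using sym_mat_mat_inv[OF pd] unfolding \<Theta>s .
    have diag: "\<forall>i<d. \<Theta>s i i \<noteq> 0" using mat_inv_diag_pos[OF pd] unfolding \<Theta>s by force
    have "0 < sqrt (real (nz d \<Theta>s))" using dim_le_nz[where A=\<Theta>s, OF diag] False by simp
    hence "lam * sqrt (real (nz d \<Theta>s)) \<le> \<kappa> * \<epsilon> / 24" using lam(2) by (simp add: field_simps)
    from minimizer_error_bound[OF S _ \<Theta>s_sym diag hess \<kappa> \<epsilon> lam(1) this \<Theta>t] min \<Theta>s_sym False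
    show ?thesis by simp
  qed
qed

end
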